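(* Let $p>2$ be prime and let $C$ be a $\mathbb{Z}_p\mathbb{Z}_{p^2}$-linear code of type $(\alpha,\beta;\gamma,\delta;\kappa)$ and length $n=\alpha+p\beta$. Then $\ker(C)\in\{\gamma+\delta,\gamma+\delta+1,\ldots,\gamma+2\delta\}$.
   Context: A $\mathbb{Z}_p\mathbb{Z}_{p^2}$-additive code $\mathcal{C}$ is a subgroup of $\mathbb{Z}_p^\alpha\times\mathbb{Z}_{p^2}^\beta$; as a group $\mathcal{C}\cong\mathbb{Z}_p^\gamma\times\mathbb{Z}_{p^2}^\delta$, and if $\kappa$ is the $\mathbb{Z}_p$-dimension of the projection onto the first $\alpha$ coordinates of the subcode of codewords of order dividing $p$, $\mathcal{C}$ has type $(\alpha,\beta;\gamma,\delta;\kappa)$. The Gray map is $\phi(\theta)=\theta''(1,\ldots,1)+\theta'(0,1,\ldots,p-1)$ for $\theta=\theta''p+\theta'\in\mathbb{Z}_{p^2}$, $\theta',\theta''\in\{0,\ldots,p-1\}$, and $\Phi(\mathbf{x},\mathbf{y})=(\mathbf{x},\phi(y_1),\ldots,\phi(y_\beta))$. A $\mathbb{Z}_p\mathbb{Z}_{p^2}$-linear code of that type is $C=\Phi(\mathcal{C})$. $K(C)=\{\mathbf{x}\in\mathbb{Z}_p^n\mid C+\mathbf{x}=C\}$ and $\ker(C)=\dim_{\mathbb{Z}_p}K(C)$. *)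

theory Defs
  imports Main "HOL-Computational_Algebra.Primes"
begin

definition vecs :: "nat \<Rightarrow> nat \<Rightarrow> nat list set" where
  "vecs m n = {xs. length xs = n \<and> (\<forall>a\<in>set xs. a < m)}"

definition vadd :: "nat \<Rightarrow> nat list \<Rightarrow> nat list \<Rightarrow> nat list" where
  "vadd m xs ys = map2 (\<lambda>a b. (a + b) mod m) xs ys"

definition vneg :: "nat \<Rightarrow> nat list \<Rightarrow> nat list" where
  "vneg m xs = map (\<lambda>a. (m - a) mod m) xs"

definition vsmul :: "nat \<Rightarrow> nat \<Rightarrow> nat list \<Rightarrow> nat list" where
  "vsmul m k xs = map (\<lambda>a. (k * a) mod m) xs"

text \<open>Elements of Z_p^alpha x Z_{p^2}^beta as pairs of lists; group operations.\<close>

type_synonym mixvec = "nat list \<times> nat list"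

definition mzero :: "nat \<Rightarrow> nat \<Rightarrow> mixvec" where
  "mzero \<alpha> \<beta> = (replicate \<alpha> 0, replicate \<beta> 0)"

definition madd :: "nat \<Rightarrow> mixvec \<Rightarrow> mixvec \<Rightarrow> mixvec" where
  "madd p u v = (vadd p (fst u) (fst v), vadd (p^2) (snd u) (snd v))"

definition mneg :: "nat \<Rightarrow> mixvec \<Rightarrow> mixvec" where
  "mneg p u = (vneg p (fst u), vneg (p^2) (snd u))"

definition msmul :: "nat \<Rightarrow> nat \<Rightarrow> mixvec \<Rightarrow> mixvec" where
  "msmul p k u = (vsmul p k (fst u), vsmul (p^2) k (snd u))"

definition additive_code :: "nat \<Rightarrow> nat \<Rightarrow> nat \<Rightarrow> mixvec set \<Rightarrow> bool" where
  "additive_code p \<alpha> \<beta> CC \<longleftrightarrow>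
     CC \<subseteq> vecs p \<alpha> \<times> vecs (p^2) \<beta> \<and> mzero \<alpha> \<beta> \<in> CC \<and>
     (\<forall>u\<in>CC. \<forall>v\<in>CC. madd p u v \<in> CC) \<and> (\<forall>u\<in>CC. mneg p u \<in> CC)"

definition msum :: "nat \<Rightarrow> nat \<Rightarrow> nat \<Rightarrow> mixvec list \<Rightarrow> mixvec" where
  "msum p \<alpha> \<beta> ws = foldr (madd p) ws (mzero \<alpha> \<beta>)"

text \<open>The group CC is isomorphic to Z_p^gamma x Z_{p^2}^delta: there are elements
  u_1..u_gamma (killed by p) and v_1..v_delta (killed by p^2) such that
  (a,b) \<mapsto> sum a_i u_i + sum b_j v_j is a bijection from
  Z_p^gamma x Z_{p^2}^delta onto CC (this map is then a group isomorphism).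
  kappa: the projection onto the first alpha coordinates of the subcode of
  codewords of order dividing p has Z_p-dimension kappa, i.e. p^kappa elements.\<close>

definition has_type ::
  "nat \<Rightarrow> nat \<Rightarrow> nat \<Rightarrow> nat \<Rightarrow> nat \<Rightarrow> nat \<Rightarrow> mixvec set \<Rightarrow> bool" where
  "has_type p \<alpha> \<beta> \<gamma> \<delta> \<kappa> CC \<longleftrightarrow>
     additive_code p \<alpha> \<beta> CC \<and>
     (\<exists>us vs. length us = \<gamma> \<and> length vs = \<delta> \<and> set us \<subseteq> CC \<and> set vs \<subseteq> CC \<and>
        (\<forall>u\<in>set us. msmul p p u = mzero \<alpha> \<beta>) \<and>
        (\<forall>v\<in>set vs. msmul p (p^2) v = mzero \<alpha> \<beta>) \<and>
        bij_betw (\<lambda>(a, b). msum p \<alpha> \<beta> (map2 (msmul p) a us @ map2 (msmul p) b vs))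
          (vecs p \<gamma> \<times> vecs (p^2) \<delta>) CC) \<and>
     card (fst ` {c\<in>CC. msmul p p c = mzero \<alpha> \<beta>}) = p ^ \<kappa>"

definition gray1 :: "nat \<Rightarrow> nat \<Rightarrow> nat list" where
  "gray1 p \<theta> = map (\<lambda>i. (\<theta> div p + (\<theta> mod p) * i) mod p) [0..<p]"

definition Gray :: "nat \<Rightarrow> mixvec \<Rightarrow> nat list" where
  "Gray p c = fst c @ concat (map (gray1 p) (snd c))"

definition kernel_set :: "nat \<Rightarrow> nat \<Rightarrow> nat list set \<Rightarrow> nat list set" where
  "kernel_set p n C = {x \<in> vecs p n. (\<lambda>c. vadd p c x) ` C = C}"

definition ker_dim :: "nat \<Rightarrow> nat \<Rightarrow> nat list set \<Rightarrow> nat" where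
  "ker_dim p n C = (THE k. card (kernel_set p n C) = p ^ k)"

end

theory Submission
  imports Defs "HOL-Algebra.Coset"
begin

text \<open>
  The kernel \<open>K(C)\<close> of \<open>C = \<Phi>(\<C>)\<close> is a subgroup of \<open>\<int>\<^sub>p\<^sup>n\<close>, so \<open>|K(C)| = p\<^sup>k\<close>.
  Since \<open>C\<close> contains the zero word, \<open>K(C) \<subseteq> C\<close>, and \<open>|C| = |\<C>| = p\<^sup>\<gamma>\<^sup>+\<^sup>2\<^sup>\<delta>\<close>
  because the Gray map is injective. Conversely, if \<open>u \<in> \<C>\<close> has order \<open>p\<close>, its
  \<open>\<int>\<^sub>p\<^sub>2\<close>-entries are multiples of \<open>p\<close>, and on these the Gray map is additive:
  \<open>\<Phi>(c + u) = \<Phi>(c) + \<Phi>(u)\<close>. Hence \<open>\<Phi>(u) \<in> K(C)\<close>, and the \<open>p\<^sup>\<gamma>\<^sup>+\<^sup>\<delta>\<close> codewords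
  of order \<open>p\<close> give as many elements of \<open>K(C)\<close>.
\<close>

section \<open>Vectors over \<open>\<int>\<^sub>m\<close>\<close>

lemma vecs_eq_lists: "vecs m n = {xs. set xs \<subseteq> {..<m} \<and> length xs = n}"
  by (auto simp: vecs_def)

lemma finite_vecs: "finite (vecs m n)"
  by (simp add: vecs_eq_lists finite_lists_length_eq)

lemma card_vecs: "card (vecs m n) = m ^ n"
  by (simp add: vecs_eq_lists card_lists_length_eq)

lemma length_vecs: "xs \<in> vecs m n \<Longrightarrow> length xs = n"
  by (simp add: vecs_def)

lemma nth_vecs: "xs \<in> vecs m n \<Longrightarrow> i < n \<Longrightarrow> xs ! i < m"
  by (simp add: vecs_def)

lemma vecsI: "length xs = n \<Longrightarrow> (\<And>i. i < n \<Longrightarrow> xs ! i < m) \<Longrightarrow> xs \<in> vecs m n"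
  by (auto simp: vecs_def in_set_conv_nth)

lemma replicate_0_vecs: "m > 0 \<Longrightarrow> replicate n 0 \<in> vecs m n"
  by (simp add: vecs_def)

lemma length_vadd [simp]: "length (vadd m xs ys) = min (length xs) (length ys)"
  by (simp add: vadd_def)

lemma nth_vadd [simp]:
  "i < length xs \<Longrightarrow> i < length ys \<Longrightarrow> vadd m xs ys ! i = (xs ! i + ys ! i) mod m"
  by (simp add: vadd_def)

lemma vadd_append:
  "length xs = length xs' \<Longrightarrow> vadd m (xs @ ys) (xs' @ ys') = vadd m xs xs' @ vadd m ys ys'"
  by (simp add: vadd_def zip_append)

lemma vadd_assoc: "vadd m (vadd m xs ys) zs = vadd m xs (vadd m ys zs)"
  by (rule nth_equalityI) (simp_all add: mod_add_left_eq mod_add_right_eq add.assoc)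

lemma vadd_replicate_0: "xs \<in> vecs m n \<Longrightarrow> vadd m (replicate n 0) xs = xs"
  by (rule nth_equalityI) (simp_all add: length_vecs nth_vecs)

lemma vadd_vecs: "m > 0 \<Longrightarrow> xs \<in> vecs m n \<Longrightarrow> ys \<in> vecs m n \<Longrightarrow> vadd m xs ys \<in> vecs m n"
  by (rule vecsI) (simp_all add: length_vecs)

lemma vneg_vecs: "m > 0 \<Longrightarrow> xs \<in> vecs m n \<Longrightarrow> vneg m xs \<in> vecs m n"
  by (rule vecsI) (simp_all add: vneg_def length_vecs)

lemma vadd_vneg: "xs \<in> vecs m n \<Longrightarrow> vadd m (vneg m xs) xs = replicate n 0"
proof (rule nth_equalityI)
  fix i assume i: "i < length (vadd m (vneg m xs) xs)"
  assume xs: "xs \<in> vecs m n"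
  then have "xs ! i < m" "i < n"
    using i by (simp_all add: nth_vecs length_vecs vneg_def)
  then show "vadd m (vneg m xs) xs ! i = replicate n 0 ! i"
    using xs by (simp add: vneg_def length_vecs mod_add_left_eq)
qed (simp add: vneg_def length_vecs)

lemma vsmul_vadd: "vsmul m k (vadd m xs ys) = vadd m (vsmul m k xs) (vsmul m k ys)"
  by (rule nth_equalityI)
    (simp_all add: vsmul_def mod_mult_right_eq mod_add_eq distrib_left)

lemma vsmul_vsmul: "vsmul m k (vsmul m j xs) = vsmul m (k * j) xs"
  by (simp add: vsmul_def mod_mult_right_eq mult.assoc)

lemma vsmul_mod: "m dvd m' \<Longrightarrow> vsmul m (k mod m') xs = vsmul m k xs"
  by (simp add: vsmul_def mod_mult_left_eq[of "k mod m'", symmetric] mod_mod_cancel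
      mod_mult_left_eq)

lemma vsmul_0: "vsmul m 0 xs = replicate (length xs) 0"
  by (simp add: vsmul_def map_replicate_const)

lemma vsmul_self: "vsmul m m xs = replicate (length xs) 0"
  by (simp add: vsmul_def map_replicate_const)

lemma mult_mod_square_eq_0_iff: "(p::nat) > 0 \<Longrightarrow> p * x mod p^2 = 0 \<longleftrightarrow> p dvd x"
  by (simp add: power2_eq_square mod_mult_mult1 mod_eq_0_iff_dvd)

lemma vsmul_square_eq_0_iff:
  "p > 0 \<Longrightarrow> vsmul (p^2) p xs = replicate (length xs) 0 \<longleftrightarrow> (\<forall>x\<in>set xs. p dvd x)"
  by (induct xs) (simp_all add: vsmul_def mult_mod_square_eq_0_iff)

section \<open>The kernel of a set of vectors\<close>

definition vec_group :: "nat \<Rightarrow> nat \<Rightarrow> nat list monoid" where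
  "vec_group m n = \<lparr>carrier = vecs m n, mult = vadd m, one = replicate n 0\<rparr>"

lemma vec_group_simps [simp]:
  "carrier (vec_group m n) = vecs m n"
  "mult (vec_group m n) = vadd m"
  "one (vec_group m n) = replicate n 0"
  by (simp_all add: vec_group_def)

lemma group_vec_group: "m > 0 \<Longrightarrow> group (vec_group m n)"
  by (rule groupI)
    (auto simp: vadd_vecs vadd_assoc vadd_replicate_0 replicate_0_vecs
      intro: vneg_vecs vadd_vneg)

lemma kernel_set_subgroup:
  assumes "p > 0" and "C \<subseteq> vecs p n"
  shows "subgroup (kernel_set p n C) (vec_group p n)"
proof -
  interpret G: group "vec_group p n"
    using group_vec_group[OF assms(1)] .
  show ?thesis
  proof (rule G.subgroupI)
    have "(\<lambda>c. vadd p c (replicate n 0)) ` C = C"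
      using assms(2) by (force simp: G.r_one[simplified] image_iff)
    then have "replicate n 0 \<in> kernel_set p n C"
      using assms(1) by (simp add: kernel_set_def replicate_0_vecs)
    then show "kernel_set p n C \<noteq> {}"
      by blast
  next
    fix x y assume "x \<in> kernel_set p n C" "y \<in> kernel_set p n C"
    then have x: "x \<in> vecs p n" "(\<lambda>c. vadd p c x) ` C = C"
      and y: "y \<in> vecs p n" "(\<lambda>c. vadd p c y) ` C = C"
      by (simp_all add: kernel_set_def)
    have "(\<lambda>c. vadd p c (vadd p x y)) ` C = (\<lambda>c. vadd p c y) ` (\<lambda>c. vadd p c x) ` C"
      by (simp add: image_image vadd_assoc)
    then show "x \<otimes>\<^bsub>vec_group p n\<^esub> y \<in> kernel_set p n C"
      using x y assms(1) by (simp add: kernel_set_def vadd_vecs)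
  next
    fix x assume "x \<in> kernel_set p n C"
    then have x: "x \<in> carrier (vec_group p n)" "(\<lambda>c. vadd p c x) ` C = C"
      by (simp_all add: kernel_set_def)
    let ?x' = "inv\<^bsub>vec_group p n\<^esub> x"
    have "vadd p (vadd p c x) ?x' = c" if "c \<in> C" for c
      using that assms(2) x(1) G.inv_closed[OF x(1)]
      by (metis G.m_assoc G.r_inv G.r_one subsetD vec_group_simps)
    then have "(\<lambda>c. vadd p c ?x') ` (\<lambda>c. vadd p c x) ` C = C"
      by (simp add: image_image)
    then show "?x' \<in> kernel_set p n C"
      using x G.inv_closed[OF x(1)] by (simp add: kernel_set_def)
  qed (auto simp: kernel_set_def)
qed

lemma card_kernel_set_prime_power:
  assumes "prime p" and "C \<subseteq> vecs p n"
  obtains k where "card (kernel_set p n C) = p ^ k"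
proof -
  have p: "p > 0"
    using assms(1) prime_gt_0_nat by blast
  interpret G: group "vec_group p n"
    using group_vec_group[OF p] .
  have "card (rcosets\<^bsub>vec_group p n\<^esub> kernel_set p n C) * card (kernel_set p n C) = p ^ n"
    using G.lagrange[OF kernel_set_subgroup[OF p assms(2)]] by (simp add: order_def card_vecs)
  then have "card (kernel_set p n C) dvd p ^ n"
    by (metis dvd_triv_right)
  then show thesis
    using that divides_primepow_nat[OF assms(1)] by blast
qed

lemma ker_dim_eqI: "p > 1 \<Longrightarrow> card (kernel_set p n C) = p ^ k \<Longrightarrow> ker_dim p n C = k"
  unfolding ker_dim_def by (rule the_equality) simp_all

lemma kernel_set_subset: "replicate n 0 \<in> C \<Longrightarrow> kernel_set p n C \<subseteq> C"
  by (force simp: kernel_set_def vadd_replicate_0)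

lemma kernel_setI:
  assumes "p > 0" and "finite C" and "C \<subseteq> vecs p n" and x: "x \<in> vecs p n"
    and "(\<lambda>c. vadd p c x) ` C \<subseteq> C"
  shows "x \<in> kernel_set p n C"
proof -
  interpret G: group "vec_group p n"
    using group_vec_group[OF assms(1)] .
  have "inj_on (\<lambda>c. vadd p c x) C"
    using assms(3) x by (intro inj_onI) (metis G.right_cancel subsetD vec_group_simps(1,2))
  then have "card ((\<lambda>c. vadd p c x) ` C) = card C"
    by (rule card_image)
  then have "(\<lambda>c. vadd p c x) ` C = C"
    using assms(2,5) by (intro card_subset_eq) auto
  then show ?thesis
    using x by (simp add: kernel_set_def)
qed

lemma ker_dim_bounds:
  assumes "prime p" and C: "C \<subseteq> vecs p n" and "replicate n 0 \<in> C"
    and A: "A \<subseteq> kernel_set p n C" and "card A = p ^ a" and "card C = p ^ c"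
  shows "ker_dim p n C \<in> {a..c}"
proof -
  have p: "p > 1"
    using assms(1) prime_gt_1_nat by blast
  obtain k where k: "card (kernel_set p n C) = p ^ k"
    using card_kernel_set_prime_power[OF assms(1) C] .
  have finite: "finite C"
    using C finite_vecs by (rule finite_subset)
  have K: "kernel_set p n C \<subseteq> C"
    using assms(3) by (rule kernel_set_subset)
  have "p ^ a \<le> p ^ k"
    using card_mono[OF finite_subset[OF K finite] A] assms(5) k by simp
  moreover have "p ^ k \<le> p ^ c"
    using card_mono[OF finite K] assms(6) k by simp
  ultimately show ?thesis
    using ker_dim_eqI[OF p k] p by simp
qed

lemma msmul_msmul: "msmul p k (msmul p j u) = msmul p (k * j) u"
  by (simp add: msmul_def vsmul_vsmul)

lemma msmul_mod_square: "msmul p (k mod p^2) u = msmul p k u"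
  by (simp add: msmul_def vsmul_mod)

lemma msmul_0: "u \<in> vecs p \<alpha> \<times> vecs (p^2) \<beta> \<Longrightarrow> msmul p 0 u = mzero \<alpha> \<beta>"
  by (auto simp: msmul_def mzero_def vsmul_0 length_vecs)

lemma msmul_mzero [simp]: "msmul p k (mzero \<alpha> \<beta>) = mzero \<alpha> \<beta>"
  by (simp add: msmul_def mzero_def vsmul_def)

lemma madd_mzero [simp]: "madd p (mzero \<alpha> \<beta>) (mzero \<alpha> \<beta>) = mzero \<alpha> \<beta>"
  by (simp add: madd_def mzero_def vadd_def)

lemma msmul_madd: "msmul p k (madd p u v) = madd p (msmul p k u) (msmul p k v)"
  by (simp add: msmul_def madd_def vsmul_vadd)

lemma msmul_msum: "msmul p k (msum p \<alpha> \<beta> ws) = msum p \<alpha> \<beta> (map (msmul p k) ws)"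
  by (induct ws) (simp_all add: msum_def msmul_madd)

lemma msum_mzeros: "set ws \<subseteq> {mzero \<alpha> \<beta>} \<Longrightarrow> msum p \<alpha> \<beta> ws = mzero \<alpha> \<beta>"
  by (induct ws) (simp_all add: msum_def)

lemma msmul_p_eq_mzero_iff:
  assumes "p > 0" and "u \<in> vecs p \<alpha> \<times> vecs (p^2) \<beta>"
  shows "msmul p p u = mzero \<alpha> \<beta> \<longleftrightarrow> (\<forall>x\<in>set (snd u). p dvd x)"
proof -
  have "fst u \<in> vecs p \<alpha>" "snd u \<in> vecs (p^2) \<beta>"
    using assms(2) by auto
  then have "msmul p p u = mzero \<alpha> \<beta> \<longleftrightarrow> vsmul (p^2) p (snd u) = replicate (length (snd u)) 0"
    by (simp add: msmul_def mzero_def vsmul_self length_vecs)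
  then show ?thesis
    using assms(1) by (simp add: vsmul_square_eq_0_iff)
qed

section \<open>The Gray map\<close>

lemma mod_add_left_cancel_less:
  fixes a x y m :: nat
  assumes "(a + x) mod m = (a + y) mod m" and "x < m" and "y < m"
  shows "x = y"
proof -
  have "m dvd nat \<bar>int x - int y\<bar>"
    using assms(1) by (simp add: mod_eq_iff_dvd_symdiff_nat)
  moreover have "nat \<bar>int x - int y\<bar> < m"
    using assms(2,3) by linarith
  ultimately have "nat \<bar>int x - int y\<bar> = 0"
    using dvd_imp_le not_le by blast
  then show ?thesis
    by simp
qed

lemma length_gray1 [simp]: "length (gray1 p t) = p"
  by (simp add: gray1_def)

lemma nth_gray1: "i < p \<Longrightarrow> gray1 p t ! i = (t div p + (t mod p) * i) mod p"
  by (simp add: gray1_def)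

lemma gray1_0: "gray1 p 0 = replicate p 0"
  by (simp add: gray1_def map_replicate_const)

text \<open>Coordinate 0 of the image reads off \<open>t div p\<close>, coordinate 1 then reads off \<open>t mod p\<close>.\<close>

lemma inj_on_gray1: "p \<ge> 2 \<Longrightarrow> inj_on (gray1 p) {..<p^2}"
proof (rule inj_onI)
  fix t s assume p: "p \<ge> 2" and t: "t \<in> {..<p^2}" and s: "s \<in> {..<p^2}"
    and eq: "gray1 p t = gray1 p s"
  have "t div p < p" "s div p < p"
    using t s by (simp_all add: power2_eq_square less_mult_imp_div_less)
  moreover have "gray1 p t ! 0 = gray1 p s ! 0"
    using eq by simp
  ultimately have div_eq: "t div p = s div p"
    using p by (simp add: nth_gray1)
  have "gray1 p t ! 1 = gray1 p s ! 1"
    using eq by simp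
  then have "(t div p + t mod p) mod p = (s div p + s mod p) mod p"
    using p by (simp add: nth_gray1)
  then have "t mod p = s mod p"
    using div_eq p by (auto intro: mod_add_left_cancel_less)
  then show "t = s"
    using div_eq by (metis div_mult_mod_eq)
qed

lemma concat_gray1_vecs: "p > 0 \<Longrightarrow> concat (map (gray1 p) ys) \<in> vecs p (p * length ys)"
  by (induct ys) (auto simp: vecs_def gray1_def)

lemma inj_on_concat_gray1:
  assumes "p \<ge> 2"
  shows "inj_on (\<lambda>ys. concat (map (gray1 p) ys)) (vecs (p^2) n)"
proof (rule inj_onI)
  fix xs ys assume "xs \<in> vecs (p^2) n" "ys \<in> vecs (p^2) n"
    and "concat (map (gray1 p) xs) = concat (map (gray1 p) ys)"
  then show "xs = ys"
  proof (induct xs arbitrary: ys n)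
    case Nil
    then show ?case by (simp add: vecs_def)
  next
    case (Cons x xs)
    then obtain y ys' n' where ys: "ys = y # ys'" and n: "n = Suc n'"
      by (cases ys) (auto simp: vecs_def)
    have "x \<in> {..<p^2}" "y \<in> {..<p^2}" "xs \<in> vecs (p^2) n'" "ys' \<in> vecs (p^2) n'"
      using Cons.prems(1,2) by (simp_all add: ys n vecs_def)
    moreover have "gray1 p x = gray1 p y"
      and "concat (map (gray1 p) xs) = concat (map (gray1 p) ys')"
      using Cons.prems(3) by (simp_all add: ys)
    ultimately show ?case
      using Cons.hyps inj_on_gray1[OF assms] by (simp add: ys inj_on_def)
  qed
qed

lemma Gray_vecs:
  "p > 0 \<Longrightarrow> c \<in> vecs p \<alpha> \<times> vecs (p^2) \<beta> \<Longrightarrow> Gray p c \<in> vecs p (\<alpha> + p * \<beta>)"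
  using concat_gray1_vecs[of p "snd c"] by (auto simp: Gray_def vecs_def)

lemma inj_on_Gray: "p \<ge> 2 \<Longrightarrow> inj_on (Gray p) (vecs p \<alpha> \<times> vecs (p^2) \<beta>)"
  using inj_on_concat_gray1[of p \<beta>]
  by (auto simp: inj_on_def Gray_def length_vecs)

lemma Gray_mzero: "Gray p (mzero \<alpha> \<beta>) = replicate (\<alpha> + p * \<beta>) 0"
  by (induct \<beta>) (simp_all add: Gray_def mzero_def gray1_0 replicate_add)

lemma gray1_add_multiple:
  assumes "p > 0" and "p dvd u"
  shows "gray1 p ((t + u) mod p^2) = vadd p (gray1 p t) (gray1 p u)"
proof (rule nth_equalityI)
  obtain q where u: "u = p * q"
    using assms(2) by blast
  have high: "(t + u) mod p^2 div p = (q + t div p) mod p"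
    using assms(1) by (simp add: u power2_eq_square mod_mult2_eq)
  have "p dvd p^2"
    by simp
  then have low: "(t + u) mod p^2 mod p = t mod p"
    by (simp only: mod_mod_cancel) (simp add: u)
  fix i assume "i < length (gray1 p ((t + u) mod p^2))"
  then have i: "i < p"
    by simp
  have "gray1 p ((t + u) mod p^2) ! i = (t mod p * i + (q + t div p) mod p) mod p"
    using i by (simp add: nth_gray1 high low add.commute)
  also have "\<dots> = (t div p + t mod p * i + q) mod p"
    by (simp only: mod_add_right_eq) (simp add: ac_simps)
  also have "\<dots> = vadd p (gray1 p t) (gray1 p u) ! i"
    using i assms(1) by (simp add: nth_gray1 u mod_add_eq)
  finally show "gray1 p ((t + u) mod p^2) ! i = vadd p (gray1 p t) (gray1 p u) ! i" .
qed simp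

lemma concat_gray1_vadd:
  assumes "p > 0" and "length ys = length zs" and "\<forall>z\<in>set zs. p dvd z"
  shows "concat (map (gray1 p) (vadd (p^2) ys zs)) =
    vadd p (concat (map (gray1 p) ys)) (concat (map (gray1 p) zs))"
  using assms(2,3)
  by (induct ys zs rule: list_induct2)
    (simp_all add: vadd_def vadd_append gray1_add_multiple[OF assms(1)])

lemma Gray_madd:
  assumes p: "p > 0"
    and c: "c \<in> vecs p \<alpha> \<times> vecs (p^2) \<beta>" and u: "u \<in> vecs p \<alpha> \<times> vecs (p^2) \<beta>"
    and "msmul p p u = mzero \<alpha> \<beta>"
  shows "Gray p (madd p c u) = vadd p (Gray p c) (Gray p u)"
proof -
  have "\<forall>z\<in>set (snd u). p dvd z"
    using assms by (simp add: msmul_p_eq_mzero_iff)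
  with c u show ?thesis
    by (auto simp: Gray_def madd_def vadd_append length_vecs concat_gray1_vadd[OF p])
qed

section \<open>Codes of a given type\<close>

definition lincomb ::
  "nat \<Rightarrow> nat \<Rightarrow> nat \<Rightarrow> mixvec list \<Rightarrow> mixvec list \<Rightarrow> nat list \<Rightarrow> nat list \<Rightarrow> mixvec" where
  "lincomb p \<alpha> \<beta> us vs a b = msum p \<alpha> \<beta> (map2 (msmul p) a us @ map2 (msmul p) b vs)"

lemma lincomb_0:
  assumes "set us \<subseteq> vecs p \<alpha> \<times> vecs (p^2) \<beta>" and "set vs \<subseteq> vecs p \<alpha> \<times> vecs (p^2) \<beta>"
  shows "lincomb p \<alpha> \<beta> us vs (replicate (length us) 0) (replicate (length vs) 0) = mzero \<alpha> \<beta>"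
  using assms unfolding lincomb_def
  by (intro msum_mzeros) (auto simp: zip_replicate1 msmul_0)

lemma msmul_p_lincomb:
  assumes "set us \<subseteq> vecs p \<alpha> \<times> vecs (p^2) \<beta>"
    and "\<And>u. u \<in> set us \<Longrightarrow> msmul p p u = mzero \<alpha> \<beta>"
    and "length a = length us" and "length b = length vs"
  shows "msmul p p (lincomb p \<alpha> \<beta> us vs a b) =
    lincomb p \<alpha> \<beta> us vs (replicate (length us) 0) (vsmul (p^2) p b)"
proof -
  have "map (msmul p p) (map2 (msmul p) a us) = map2 (msmul p) (replicate (length us) 0) us"
    using assms(3,1,2)
  proof (induct a us rule: list_induct2)
    case (Cons x a u us)
    have u: "u \<in> vecs p \<alpha> \<times> vecs (p^2) \<beta>"
      using Cons.prems(1) by simp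
    have "msmul p p (msmul p x u) = msmul p x (msmul p p u)"
      by (simp add: msmul_msmul mult.commute)
    also have "\<dots> = msmul p 0 u"
      using Cons.prems(2) msmul_0[OF u] by simp
    finally show ?case
      using Cons by simp
  qed simp
  moreover have "map (msmul p p) (map2 (msmul p) b vs) = map2 (msmul p) (vsmul (p^2) p b) vs"
    using assms(4)
    by (induct b vs rule: list_induct2) (simp_all add: vsmul_def msmul_msmul msmul_mod_square)
  ultimately show ?thesis
    by (simp add: lincomb_def msmul_msum)
qed

lemma card_multiples_below: "p > 0 \<Longrightarrow> card {x::nat. x < p * m \<and> p dvd x} = m"
proof -
  assume p: "p > 0"
  have "{x. x < p * m \<and> p dvd x} = (\<lambda>i. p * i) ` {..<m}"
    using p by auto
  moreover have "inj_on (\<lambda>i. p * i) {..<m}"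
    using p by (simp add: inj_on_def)
  ultimately show ?thesis
    by (simp add: card_image)
qed

lemma has_typeE:
  assumes "has_type p \<alpha> \<beta> \<gamma> \<delta> \<kappa> CC"
  obtains us vs where "length us = \<gamma>" and "length vs = \<delta>"
    and "set us \<subseteq> vecs p \<alpha> \<times> vecs (p^2) \<beta>" and "set vs \<subseteq> vecs p \<alpha> \<times> vecs (p^2) \<beta>"
    and "\<And>u. u \<in> set us \<Longrightarrow> msmul p p u = mzero \<alpha> \<beta>"
    and "bij_betw (\<lambda>(a, b). lincomb p \<alpha> \<beta> us vs a b) (vecs p \<gamma> \<times> vecs (p^2) \<delta>) CC"
proof -
  have "CC \<subseteq> vecs p \<alpha> \<times> vecs (p^2) \<beta>"
    using assms by (simp add: has_type_def additive_code_def)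
  moreover obtain us vs where "length us = \<gamma>" "length vs = \<delta>" "set us \<subseteq> CC" "set vs \<subseteq> CC"
    "\<forall>u\<in>set us. msmul p p u = mzero \<alpha> \<beta>"
    "bij_betw (\<lambda>(a, b). lincomb p \<alpha> \<beta> us vs a b) (vecs p \<gamma> \<times> vecs (p^2) \<delta>) CC"
    using assms unfolding has_type_def lincomb_def by blast
  ultimately show thesis
    using that by blast
qed

lemma card_has_type:
  "has_type p \<alpha> \<beta> \<gamma> \<delta> \<kappa> CC \<Longrightarrow> card CC = p ^ (\<gamma> + 2 * \<delta>)"
  by (erule has_typeE)
    (auto dest!: bij_betw_same_card simp: card_cartesian_product card_vecs power_add power_mult)

text \<open>Multiplying \<open>\<Sum> a\<^sub>i u\<^sub>i + \<Sum> b\<^sub>j v\<^sub>j\<close> by \<open>p\<close> gives \<open>\<Sum> (p b\<^sub>j) v\<^sub>j\<close>, so by injectivity of the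
  parametrisation a codeword has order \<open>p\<close> iff all \<open>b\<^sub>j\<close> are multiples of \<open>p\<close>.\<close>

lemma card_order_p_subcode:
  assumes p: "p > 0" and "has_type p \<alpha> \<beta> \<gamma> \<delta> \<kappa> CC"
  shows "card {c \<in> CC. msmul p p c = mzero \<alpha> \<beta>} = p ^ (\<gamma> + \<delta>)"
proof -
  obtain us vs where len_us: "length us = \<gamma>" and len_vs: "length vs = \<delta>"
    and us: "set us \<subseteq> vecs p \<alpha> \<times> vecs (p^2) \<beta>" and vs: "set vs \<subseteq> vecs p \<alpha> \<times> vecs (p^2) \<beta>"
    and us_order_p: "\<And>u. u \<in> set us \<Longrightarrow> msmul p p u = mzero \<alpha> \<beta>"
    and bij: "bij_betw (\<lambda>(a, b). lincomb p \<alpha> \<beta> us vs a b) (vecs p \<gamma> \<times> vecs (p^2) \<delta>) CC"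
    using assms(2) by (elim has_typeE) blast
  define f where "f = (\<lambda>(a, b). lincomb p \<alpha> \<beta> us vs a b)"
  define D where "D = vecs p \<gamma> \<times> vecs (p^2) \<delta>"
  define B where "B = {b \<in> vecs (p^2) \<delta>. \<forall>x\<in>set b. p dvd x}"
  have inj: "inj_on f D" and img: "f ` D = CC"
    using bij by (simp_all add: f_def D_def bij_betw_def)
  have zero: "f (replicate \<gamma> 0, replicate \<delta> 0) = mzero \<alpha> \<beta>"
    using lincomb_0[OF us vs] len_us len_vs by (simp add: f_def)
  have order_p: "msmul p p (f (a, b)) = mzero \<alpha> \<beta> \<longleftrightarrow> b \<in> B" if ab: "(a, b) \<in> D" for a b
  proof -
    have b: "b \<in> vecs (p^2) \<delta>" and lengths: "length a = length us" "length b = length vs"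
      using ab len_us len_vs by (auto simp: D_def length_vecs)
    have "msmul p p (f (a, b)) = f (replicate \<gamma> 0, vsmul (p^2) p b)"
      using msmul_p_lincomb[OF us us_order_p lengths] len_us by (simp add: f_def)
    moreover have "(replicate \<gamma> 0, vsmul (p^2) p b) \<in> D" "(replicate \<gamma> 0, replicate \<delta> 0) \<in> D"
      using p b by (auto simp: D_def vecs_def vsmul_def)
    ultimately have "msmul p p (f (a, b)) = mzero \<alpha> \<beta> \<longleftrightarrow> vsmul (p^2) p b = replicate \<delta> 0"
      using inj zero by (metis inj_on_eq_iff prod.inject)
    then show ?thesis
      using b vsmul_square_eq_0_iff[OF p, of b] by (simp add: B_def length_vecs)
  qed
  have "{c \<in> CC. msmul p p c = mzero \<alpha> \<beta>} = f ` (vecs p \<gamma> \<times> B)"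
    using order_p by (auto simp flip: img simp: D_def B_def)
  moreover have "inj_on f (vecs p \<gamma> \<times> B)"
    using inj by (rule inj_on_subset) (auto simp: D_def B_def)
  moreover have "B = {b. set b \<subseteq> {x. x < p * p \<and> p dvd x} \<and> length b = \<delta>}"
    by (auto simp: B_def vecs_def power2_eq_square)
  ultimately show ?thesis
    using p by (simp add: card_image card_cartesian_product card_vecs card_lists_length_eq
        card_multiples_below power_add)
qed

lemma additive_code_subset: "additive_code p \<alpha> \<beta> CC \<Longrightarrow> CC \<subseteq> vecs p \<alpha> \<times> vecs (p^2) \<beta>"
  by (simp add: additive_code_def)

lemma finite_additive_code: "additive_code p \<alpha> \<beta> CC \<Longrightarrow> finite CC"
  by (erule finite_subset[OF additive_code_subset]) (intro finite_cartesian_product finite_vecs)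

lemma Gray_order_p_in_kernel_set:
  assumes p: "p > 0" and code: "additive_code p \<alpha> \<beta> CC"
    and u: "u \<in> CC" and order_p: "msmul p p u = mzero \<alpha> \<beta>"
  shows "Gray p u \<in> kernel_set p (\<alpha> + p * \<beta>) (Gray p ` CC)"
proof (rule kernel_setI)
  have CC: "CC \<subseteq> vecs p \<alpha> \<times> vecs (p^2) \<beta>"
    using code by (rule additive_code_subset)
  show "finite (Gray p ` CC)"
    using code by (intro finite_imageI finite_additive_code)
  show "Gray p ` CC \<subseteq> vecs p (\<alpha> + p * \<beta>)"
    using CC by (auto intro: Gray_vecs[OF p])
  then show "Gray p u \<in> vecs p (\<alpha> + p * \<beta>)"
    using u by (rule subsetD[OF _ imageI])
  have "vadd p (Gray p c) (Gray p u) = Gray p (madd p c u)" if "c \<in> CC" for c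
    using Gray_madd[OF p _ _ order_p] CC u that by (simp add: subsetD)
  moreover have "madd p c u \<in> CC" if "c \<in> CC" for c
    using code u that by (simp add: additive_code_def)
  ultimately show "(\<lambda>c. vadd p c (Gray p u)) ` Gray p ` CC \<subseteq> Gray p ` CC"
    by auto
qed (rule p)

theorem lemma12:
  fixes p \<alpha> \<beta> \<gamma> \<delta> \<kappa> :: nat and CC :: "mixvec set"
  assumes "prime p" and "p > 2"
    and "has_type p \<alpha> \<beta> \<gamma> \<delta> \<kappa> CC"
  shows "ker_dim p (\<alpha> + p * \<beta>) (Gray p ` CC) \<in> {\<gamma> + \<delta> .. \<gamma> + 2 * \<delta>}"
proof (rule ker_dim_bounds[OF assms(1)])
  have p: "p > 0" "p \<ge> 2"
    using assms(2) by simp_all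
  have code: "additive_code p \<alpha> \<beta> CC"
    using assms(3) by (simp add: has_type_def)
  then have CC: "CC \<subseteq> vecs p \<alpha> \<times> vecs (p^2) \<beta>"
    by (rule additive_code_subset)
  then have inj: "inj_on (Gray p) CC"
    by (rule inj_on_subset[OF inj_on_Gray[OF p(2)]])
  let ?Cp = "{c \<in> CC. msmul p p c = mzero \<alpha> \<beta>}"
  show "Gray p ` CC \<subseteq> vecs p (\<alpha> + p * \<beta>)"
    using CC by (auto intro: Gray_vecs[OF p(1)])
  show "replicate (\<alpha> + p * \<beta>) 0 \<in> Gray p ` CC"
    using code by (auto simp: additive_code_def simp flip: Gray_mzero)
  show "Gray p ` ?Cp \<subseteq> kernel_set p (\<alpha> + p * \<beta>) (Gray p ` CC)"
    using Gray_order_p_in_kernel_set[OF p(1) code] by blast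
  show "card (Gray p ` ?Cp) = p ^ (\<gamma> + \<delta>)"
    using card_order_p_subcode[OF p(1) assms(3)] inj by (simp add: card_image inj_on_subset)
  show "card (Gray p ` CC) = p ^ (\<gamma> + 2 * \<delta>)"
    using card_has_type[OF assms(3)] inj by (simp add: card_image)
qed
end
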